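(* Let $\sigma>0$, let $f(y)=\frac{1}{y\sigma\sqrt{2\pi}}e^{-(\log y)^2/(2\sigma^2)}$ ($y>0$) be the lognormal$(0,\sigma^2)$ density, $\mathcal{L}(\theta)=\int_0^\infty e^{-\theta y}f(y)\,dy$ its Laplace transform and $\kappa=\log\mathcal{L}$. For $\theta\ge 0$ let $F_\theta$ be the distribution with density $e^{-\theta y-\kappa(\theta)}f(y)$, $y>0$. Fix $x$ with $0<x<e^{\sigma^2/2}$ and let $\theta(x)>0$ be the solution of $-\kappa'(\theta(x))=x$, i.e. the mean of $F_{\theta(x)}$ equals $x$. For $n\ge1$ let $X_1,\dots,X_n$ be i.i.d. with distribution $F_{\theta(x)}$, $S_n=X_1+\dots+X_n$, and define $$\beta_n(x)=\mathcal{L}^n(\theta(x))\,e^{\theta(x)S_n}\,\mathbf{1}\{S_n<nx\}.$$ Let $\alpha_n(x)=\mathbb{P}(S_n'\le nx)$ where $S_n'$ is a sum of $n$ i.i.d. lognormal$(0,\sigma^2)$ random variables. Then $\beta_n(x)$ is an unbiased estimator of $\alpha_n(x)$ (i.e. $\mathbb{E}[\beta_n(x)]=\alpha_n(x)$ for every $n$), and it is logarithmically efficient as $n\to\infty$: for every $\epsilon>0$, $$\limsup_{n\to\infty}\frac{\mathrm{Var}\,\beta_n(x)}{\alpha_n(x)^{2-\epsilon}}=0.$$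
   Context: $e^{\sigma^2/2}$ is the mean of the lognormal$(0,\sigma^2)$ distribution; for $0<x<e^{\sigma^2/2}$ the equation $-\kappa'(\theta)=x$ has a unique solution $\theta(x)>0$ (the Cramér function). *)

theory Defs
  imports "HOL-Probability.Probability"
begin

definition lognormal_density :: "real \<Rightarrow> real \<Rightarrow> real" where
  "lognormal_density \<sigma> y =
     (if 0 < y then exp (- (ln y)\<^sup>2 / (2 * \<sigma>\<^sup>2)) / (y * \<sigma> * sqrt (2 * pi)) else 0)"

definition lognormal_laplace :: "real \<Rightarrow> real \<Rightarrow> real" where
  "lognormal_laplace \<sigma> \<theta> = (\<integral>y. exp (- \<theta> * y) * lognormal_density \<sigma> y \<partial>lborel)"

definition lognormal_kappa :: "real \<Rightarrow> real \<Rightarrow> real" where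
  "lognormal_kappa \<sigma> \<theta> = ln (lognormal_laplace \<sigma> \<theta>)"

definition lognormal_distr :: "real \<Rightarrow> real measure" where
  "lognormal_distr \<sigma> = density lborel (\<lambda>y. ennreal (lognormal_density \<sigma> y))"

definition tilted_distr :: "real \<Rightarrow> real \<Rightarrow> real measure" where
  "tilted_distr \<sigma> \<theta> =
     density lborel (\<lambda>y. ennreal (exp (- \<theta> * y - lognormal_kappa \<sigma> \<theta>) * lognormal_density \<sigma> y))"

definition iid_law :: "nat \<Rightarrow> real measure \<Rightarrow> (nat \<Rightarrow> real) measure" where
  "iid_law n M = PiM {..<n} (\<lambda>_. M)"

definition beta_est :: "real \<Rightarrow> real \<Rightarrow> real \<Rightarrow> nat \<Rightarrow> (nat \<Rightarrow> real) \<Rightarrow> real" where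
  "beta_est \<sigma> \<theta> x n X =
     (lognormal_laplace \<sigma> \<theta>) ^ n * exp (\<theta> * (\<Sum>i<n. X i))
       * indicator {s. s < real n * x} (\<Sum>i<n. X i)"

definition alpha_prob :: "real \<Rightarrow> real \<Rightarrow> nat \<Rightarrow> real" where
  "alpha_prob \<sigma> x n =
     measure (iid_law n (lognormal_distr \<sigma>))
       {X \<in> space (iid_law n (lognormal_distr \<sigma>)). (\<Sum>i<n. X i) \<le> real n * x}"

definition beta_mean :: "real \<Rightarrow> real \<Rightarrow> real \<Rightarrow> nat \<Rightarrow> real" where
  "beta_mean \<sigma> \<theta> x n = (\<integral>X. beta_est \<sigma> \<theta> x n X \<partial>iid_law n (tilted_distr \<sigma> \<theta>))"

definition beta_var :: "real \<Rightarrow> real \<Rightarrow> real \<Rightarrow> nat \<Rightarrow> real" where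
  "beta_var \<sigma> \<theta> x n =
     (\<integral>X. (beta_est \<sigma> \<theta> x n X - beta_mean \<sigma> \<theta> x n)\<^sup>2 \<partial>iid_law n (tilted_distr \<sigma> \<theta>))"

end

theory Submission
  imports Defs
begin

text \<open>Both claims rest on the change of measure from \<open>n\<close> lognormal samples to \<open>n\<close> samples of
  \<open>F\<^sub>\<theta>\<close>: its density \<open>L(\<theta>)\<^sup>n exp (\<theta> S\<^sub>n)\<close> depends only on the sum \<open>S\<^sub>n\<close>.
  Integrating \<open>1{S\<^sub>n < n x}\<close> against it gives unbiasedness, the hyperplane \<open>S\<^sub>n = n x\<close>
  being null.  As \<open>0 \<le> \<beta>\<^sub>n \<le> L(\<theta>)\<^sup>n exp (\<theta> n x) = exp (n J)\<close> with \<open>J = \<kappa>(\<theta>) + \<theta> x\<close>,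
  the variance is at most \<open>exp (2 n J)\<close>; and \<open>J < 0\<close> because the strictly convex \<open>\<kappa>\<close> lies
  above its tangent at \<open>\<theta>\<close>, of slope \<open>- x\<close>, at the point \<open>\<kappa>(0) = 0\<close>.  Conversely, tilting at
  \<open>\<theta> + h\<close> and bounding both tails of \<open>S\<^sub>n\<close> by Chernoff's inequality gives
  \<open>\<alpha>\<^sub>n \<ge> exp (n (J - \<eta>)) / 2\<close> eventually, for every \<open>\<eta> > 0\<close>, so
  \<open>Var \<beta>\<^sub>n / \<alpha>\<^sub>n powr (2 - \<epsilon>)\<close> decays exponentially.\<close>

lemma exp_gt_one_plus_self:
  fixes z :: real
  assumes "z \<noteq> 0"
  shows "1 + z < exp z"
proof (cases "1 + z/2 \<ge> 0")
  case True
  have "(1 + z/2)^2 \<le> exp (z/2) ^ 2"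
    using True exp_ge_add_one_self[of "z/2"] by (intro power_mono) auto
  also have "\<dots> = exp z"
    by (simp add: power2_eq_square exp_add[symmetric])
  finally have "(1 + z/2)^2 \<le> exp z" .
  moreover have "0 < z^2" using assms by simp
  then have "1 + z < (1 + z/2)^2" by (simp add: power2_eq_square field_simps)
  ultimately show ?thesis by linarith
next
  case False
  then show ?thesis using exp_gt_zero[of z] by linarith
qed

lemma nn_integral_eq_SUP_indicator_incseq:
  fixes f :: "'a \<Rightarrow> ennreal"
  assumes [measurable]: "f \<in> borel_measurable M" "\<And>k. A k \<in> sets M"
    and inc: "incseq A" and supp: "\<And>x. x \<in> space M \<Longrightarrow> f x \<noteq> 0 \<Longrightarrow> \<exists>k. x \<in> A k"
  shows "(\<integral>\<^sup>+x. f x \<partial>M) = (SUP k. \<integral>\<^sup>+x. f x * indicator (A k) x \<partial>M)"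
proof -
  have "(\<integral>\<^sup>+x. f x \<partial>M) = (\<integral>\<^sup>+x. (SUP k. f x * indicator (A k) x) \<partial>M)"
  proof (rule nn_integral_cong)
    fix x assume x: "x \<in> space M"
    show "f x = (SUP k. f x * indicator (A k) x)"
    proof (cases "f x = 0")
      case False
      then obtain k where "x \<in> A k" using supp[OF x] by blast
      then show ?thesis
        by (intro antisym SUP_upper2[of k] SUP_least) (auto split: split_indicator)
    qed simp
  qed
  also have "\<dots> = (SUP k. \<integral>\<^sup>+x. f x * indicator (A k) x \<partial>M)"
  proof (rule nn_integral_monotone_convergence_SUP)
    show "incseq (\<lambda>k x. f x * indicator (A k) x)"
      using inc by (auto simp: incseq_def le_fun_def intro!: mult_left_mono split: split_indicator)
  qed simp
  finally show ?thesis .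
qed

lemma nn_integral_lborel_exp_substitution:
  fixes f :: "real \<Rightarrow> real"
  assumes f[measurable]: "f \<in> borel_measurable borel" and f_eq_0: "\<And>y. y \<le> 0 \<Longrightarrow> f y = 0"
  shows "(\<integral>\<^sup>+y. ennreal (f y) \<partial>lborel) = (\<integral>\<^sup>+u. ennreal (f (exp u) * exp u) \<partial>lborel)"
proof -
  have inc_exp: "incseq (\<lambda>k::nat. {exp (- real k)..exp (real k)})"
    by (auto simp: incseq_def intro: order_trans)
  have inc_id: "incseq (\<lambda>k::nat. {- real k..real k})"
    by (auto simp: incseq_def)
  have "(\<integral>\<^sup>+y. ennreal (f y) \<partial>lborel)
      = (SUP k::nat. \<integral>\<^sup>+y. ennreal (f y) * indicator {exp (- real k)..exp (real k)} y \<partial>lborel)"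
  proof (rule nn_integral_eq_SUP_indicator_incseq[OF _ _ inc_exp])
    fix y :: real assume "ennreal (f y) \<noteq> 0"
    then have "0 < y" using f_eq_0 by (cases "0 < y") auto
    obtain k :: nat where k: "\<bar>ln y\<bar> \<le> real k" using real_arch_simple by blast
    then have "y \<in> {exp (- real k)..exp (real k)}"
      using \<open>0 < y\<close> by (metis abs_le_iff atLeastAtMost_iff exp_le_cancel_iff exp_ln minus_le_iff)
    then show "\<exists>k. y \<in> {exp (- real k)..exp (real k)}" ..
  qed auto
  also have "\<dots> = (SUP k::nat. \<integral>\<^sup>+u. ennreal (f (exp u) * exp u) * indicator {- real k..real k} u \<partial>lborel)"
  proof (rule SUP_cong[OF refl])
    fix k :: nat
    have "(\<integral>\<^sup>+y. ennreal (f y * indicator {exp (- real k)..exp (real k)} y) \<partial>lborel)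
        = (\<integral>\<^sup>+u. ennreal (f (exp u) * exp u * indicator {- real k..real k} u) \<partial>lborel)"
      by (rule nn_integral_substitution[where g=exp and g'=exp and a="- real k" and b="real k"])
        (auto simp: set_borel_measurable_def intro!: DERIV_exp continuous_on_exp continuous_on_id)
    then show "(\<integral>\<^sup>+y. ennreal (f y) * indicator {exp (- real k)..exp (real k)} y \<partial>lborel)
        = (\<integral>\<^sup>+u. ennreal (f (exp u) * exp u) * indicator {- real k..real k} u \<partial>lborel)"
      by (simp add: ennreal_mult'' ennreal_indicator)
  qed
  also have "\<dots> = (\<integral>\<^sup>+u. ennreal (f (exp u) * exp u) \<partial>lborel)"
  proof (rule nn_integral_eq_SUP_indicator_incseq[OF _ _ inc_id, symmetric])
    fix u :: real
    obtain k :: nat where "\<bar>u\<bar> \<le> real k" using real_arch_simple by blast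
    then have "u \<in> {- real k..real k}" by auto
    then show "\<exists>k. u \<in> {- real k..real k}" ..
  qed auto
  finally show ?thesis .
qed

lemma integral_lborel_pos_if_pos_on_pos:
  fixes g :: "real \<Rightarrow> real"
  assumes "integrable lborel g" "\<And>y. 0 \<le> g y" "\<And>y. 0 < y \<Longrightarrow> y \<noteq> m \<Longrightarrow> 0 < g y"
  shows "0 < (\<integral>y. g y \<partial>lborel)"
proof -
  have "(\<integral>y. g y \<partial>lborel) \<noteq> 0"
  proof
    assume "(\<integral>y. g y \<partial>lborel) = 0"
    then have "AE y in lborel. g y = 0"
      using integral_nonneg_eq_0_iff_AE[OF assms(1)] assms(2) by simp
    then have "AE y in lborel. y \<le> (0::real)"
      using AE_lborel_singleton[of m]
    proof eventually_elim
      case (elim y)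
      then show ?case using assms(3)[of y] by force
    qed
    then obtain N where N: "{y \<in> space lborel. \<not> y \<le> (0::real)} \<subseteq> N" "emeasure lborel N = 0" "N \<in> sets lborel"
      by (rule AE_E)
    have "emeasure lborel {1..2::real} \<le> emeasure lborel N"
      using N by (intro emeasure_mono) auto
    then show False using N(2) by simp
  qed
  moreover have "0 \<le> (\<integral>y. g y \<partial>lborel)" using assms(2) by simp
  ultimately show ?thesis by simp
qed

lemma PiM_density:
  fixes g :: "'a \<Rightarrow> ennreal"
  assumes g[measurable]: "g \<in> borel_measurable M"
    and "sigma_finite_measure M" "sigma_finite_measure (density M g)" and I: "finite I"
  shows "PiM I (\<lambda>_. density M g) = density (PiM I (\<lambda>_. M)) (\<lambda>X. \<Prod>i\<in>I. g (X i))"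
proof -
  interpret D: product_sigma_finite "\<lambda>_. density M g"
    using assms(3) by (simp add: product_sigma_finite_def)
  interpret M: product_sigma_finite "\<lambda>_. M"
    using assms(2) by (simp add: product_sigma_finite_def)
  have prod_meas: "(\<lambda>X. \<Prod>i\<in>I. g (X i)) \<in> borel_measurable (PiM I (\<lambda>_. M))"
    by measurable
  show ?thesis
  proof (rule D.PiM_eqI[OF I, symmetric])
    show "sets (density (PiM I (\<lambda>_. M)) (\<lambda>X. \<Prod>i\<in>I. g (X i))) = sets (PiM I (\<lambda>_. density M g))"
      by (simp only: sets_density) (rule sets_PiM_cong, auto)
  next
    fix A assume "\<And>i. i \<in> I \<Longrightarrow> A i \<in> sets (density M g)"
    then have A: "\<And>i. i \<in> I \<Longrightarrow> A i \<in> sets M" by simp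
    have "emeasure (density (PiM I (\<lambda>_. M)) (\<lambda>X. \<Prod>i\<in>I. g (X i))) (Pi\<^sub>E I A)
        = (\<integral>\<^sup>+X. (\<Prod>i\<in>I. g (X i)) * indicator (Pi\<^sub>E I A) X \<partial>PiM I (\<lambda>_. M))"
      using A by (intro emeasure_density prod_meas sets_PiM_I_finite I)
    also have "\<dots> = (\<integral>\<^sup>+X. (\<Prod>i\<in>I. g (X i) * indicator (A i) (X i)) \<partial>PiM I (\<lambda>_. M))"
    proof (rule nn_integral_cong)
      fix X assume "X \<in> space (PiM I (\<lambda>_. M))"
      then have "indicator (Pi\<^sub>E I A) X = (\<Prod>i\<in>I. indicator (A i) (X i) :: ennreal)"
        using I by (auto simp: space_PiM PiE_iff indicator_def prod.neutral intro: prod_zero)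
      then show "(\<Prod>i\<in>I. g (X i)) * indicator (Pi\<^sub>E I A) X = (\<Prod>i\<in>I. g (X i) * indicator (A i) (X i))"
        by (simp add: prod.distrib)
    qed
    also have "\<dots> = (\<Prod>i\<in>I. \<integral>\<^sup>+y. g y * indicator (A i) y \<partial>M)"
      using A by (intro M.product_nn_integral_prod I) auto
    also have "\<dots> = (\<Prod>i\<in>I. emeasure (density M g) (A i))"
      using A by (intro prod.cong refl) (simp add: emeasure_density)
    finally show "emeasure (density (PiM I (\<lambda>_. M)) (\<lambda>X. \<Prod>i\<in>I. g (X i))) (Pi\<^sub>E I A)
        = (\<Prod>i\<in>I. emeasure (density M g) (A i))" .
  qed
qed

text \<open>Integrate out the last coordinate: for fixed \<open>X 0, \<dots>, X (k - 1)\<close> the hyperplane meets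
  the last axis in a single point.\<close>

lemma emeasure_PiM_sum_eq_const:
  fixes M :: "real measure"
  assumes "sigma_finite_measure M" and sets_M: "sets M = sets borel"
    and points: "\<And>a. emeasure M {a} = 0"
  shows "emeasure (PiM {..<Suc k} (\<lambda>_. M)) {X \<in> space (PiM {..<Suc k} (\<lambda>_. M)). (\<Sum>i<Suc k. X i) = c} = 0"
proof -
  interpret M: product_sigma_finite "\<lambda>_. M"
    using assms(1) by (simp add: product_sigma_finite_def)
  let ?P = "PiM (insert k {..<k}) (\<lambda>_. M)"
  let ?A = "{X \<in> space ?P. (\<Sum>i<Suc k. X i) = c}"
  have space_M: "space M = UNIV" using sets_eq_imp_space_eq[OF sets_M] by simp
  have [measurable]: "(\<lambda>X. X i) \<in> borel_measurable ?P" if "i \<in> insert k {..<k}" for i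
    using measurable_component_singleton[OF that, of "\<lambda>_. M"] by (simp cong: measurable_cong_sets add: sets_M)
  have "(\<lambda>X. \<Sum>i<Suc k. X i) \<in> borel_measurable ?P"
    by (intro borel_measurable_sum) (auto simp: lessThan_Suc)
  then have A: "?A \<in> sets ?P" by measurable
  have "emeasure ?P ?A = (\<integral>\<^sup>+X. (\<integral>\<^sup>+y. indicator ?A (X(k := y)) \<partial>M) \<partial>PiM {..<k} (\<lambda>_. M))"
    using A by (simp add: M.product_nn_integral_insert[symmetric])
  also have "\<dots> = (\<integral>\<^sup>+X. 0 \<partial>PiM {..<k} (\<lambda>_. M))"
  proof (rule nn_integral_cong)
    fix X assume X: "X \<in> space (PiM {..<k} (\<lambda>_. M))"
    have "indicator ?A (X(k := y)) = (indicator {c - (\<Sum>i<k. X i)} y :: ennreal)" for y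
    proof -
      have "X(k := y) \<in> space ?P"
        using X by (auto simp: space_PiM space_M PiE_def extensional_def)
      moreover have "(\<Sum>i<Suc k. (X(k := y)) i) = (\<Sum>i<k. X i) + y"
        by simp
      ultimately show ?thesis by (auto simp: indicator_def)
    qed
    then show "(\<integral>\<^sup>+y. indicator ?A (X(k := y)) \<partial>M) = 0"
      using points by (simp add: sets_M)
  qed
  finally show ?thesis by (simp add: lessThan_Suc)
qed

lemma (in prob_space) variance_le_sq_bound:
  fixes f :: "'a \<Rightarrow> real"
  assumes [measurable]: "f \<in> borel_measurable M"
    and f: "\<And>x. x \<in> space M \<Longrightarrow> 0 \<le> f x \<and> f x \<le> B"
  shows "variance f \<le> B\<^sup>2"
proof -
  have int: "integrable M f"
    using f by (intro integrable_const_bound[where B=B]) auto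
  have "0 \<le> expectation f" "expectation f \<le> B"
    using f int by (auto intro!: integral_nonneg_AE integral_le_const)
  then have dev: "(f x - expectation f)\<^sup>2 \<le> B\<^sup>2" if "x \<in> space M" for x
    using f[OF that] abs_le_square_iff[of "f x - expectation f" B] by auto
  show ?thesis
    using dev by (intro integral_le_const integrable_const_bound[where B="B\<^sup>2"]) auto
qed

lemma limsup_eq_0_if_exp_decay:
  fixes r :: "nat \<Rightarrow> real"
  assumes c: "c < 0" and bound: "\<forall>\<^sub>F n in sequentially. 0 \<le> r n \<and> r n \<le> C * exp (real n * c)"
  shows "limsup (\<lambda>n. ereal (r n)) = 0"
proof -
  have "(\<lambda>n. C * exp c ^ n) \<longlonglongrightarrow> C * 0"
    using c by (intro tendsto_mult tendsto_const LIMSEQ_power_zero) auto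
  then have upper: "(\<lambda>n. C * exp (real n * c)) \<longlonglongrightarrow> 0"
    by (simp add: exp_of_nat_mult)
  have "r \<longlonglongrightarrow> 0"
    by (rule tendsto_sandwich[OF _ _ tendsto_const upper]) (use bound in \<open>auto elim: eventually_mono\<close>)
  then have "(\<lambda>n. ereal (r n)) \<longlonglongrightarrow> 0"
    by (simp add: zero_ereal_def)
  then show ?thesis by (simp add: lim_imp_Limsup)
qed

text \<open>With \<open>\<delta> = min \<epsilon> 1\<close> and \<open>A > J + \<delta> J / 4\<close>, eventually
  \<open>v n / a n powr (2 - \<epsilon>) \<le> 4 exp (n \<delta> J / 2)\<close>; replacing \<open>2 - \<delta>\<close> by the smaller exponent
  \<open>2 - \<epsilon>\<close> only helps, as \<open>a n \<le> 1\<close>.\<close>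

lemma limsup_ratio_eq_0_if_exp_rates:
  fixes v a :: "nat \<Rightarrow> real"
  assumes J: "J < 0" and v: "\<And>n. 0 \<le> v n" "\<And>n. v n \<le> exp (real n * (2 * J))"
    and a_le_1: "\<And>n. a n \<le> 1"
    and a_lower: "\<And>\<eta>. 0 < \<eta> \<Longrightarrow> \<exists>A > J - \<eta>. \<forall>\<^sub>F n in sequentially. exp (real n * A) / 2 \<le> a n"
    and \<epsilon>: "0 < \<epsilon>"
  shows "limsup (\<lambda>n. ereal (v n / a n powr (2 - \<epsilon>))) = 0"
proof -
  define \<delta> where "\<delta> = min \<epsilon> 1"
  define p where "p = 2 - \<delta>"
  have \<delta>: "0 < \<delta>" "\<delta> \<le> \<epsilon>" and p: "1 \<le> p" "p \<le> 2"
    using \<epsilon> by (auto simp: \<delta>_def p_def)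
  obtain A where A: "J - (- \<delta> * J / 4) < A"
    and lower: "\<forall>\<^sub>F n in sequentially. exp (real n * A) / 2 \<le> a n"
    using a_lower[of "- \<delta> * J / 4"] J \<delta> by (auto simp: mult_pos_neg)
  have exponent: "2 * J - p * A \<le> \<delta> * J / 2"
  proof -
    have "p * (J + \<delta> * J / 4) \<le> p * A" using A p by (intro mult_left_mono) auto
    moreover have "p * (\<delta> * J / 4) \<ge> 2 * (\<delta> * J / 4)"
      using p \<delta> J by (intro mult_right_mono_neg) (auto intro: mult_nonneg_nonpos)
    moreover have "p * (J + \<delta> * J / 4) = (2 * J - \<delta> * J) + p * (\<delta> * J / 4)"
      by (simp add: p_def algebra_simps)
    ultimately show ?thesis by linarith
  qed
  show ?thesis
  proof (rule limsup_eq_0_if_exp_decay[where c="\<delta> * J / 2" and C="exp (2 * ln 2)"])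
    show "\<delta> * J / 2 < 0" using \<delta> J by (simp add: mult_pos_neg)
    show "\<forall>\<^sub>F n in sequentially. 0 \<le> v n / a n powr (2 - \<epsilon>)
        \<and> v n / a n powr (2 - \<epsilon>) \<le> exp (2 * ln 2) * exp (real n * (\<delta> * J / 2))"
      using lower
    proof eventually_elim
      case (elim n)
      have a_pos: "0 < a n" using elim by (rule less_le_trans[rotated]) simp
      have "p * ln 2 \<le> 2 * ln 2" using p by (intro mult_right_mono) auto
      then have "exp (p * (real n * A) - 2 * ln 2) \<le> (exp (real n * A) / 2) powr p"
        by (simp add: powr_def ln_div algebra_simps)
      also have "\<dots> \<le> a n powr p"
        using elim p by (intro powr_mono2) auto
      also have "\<dots> \<le> a n powr (2 - \<epsilon>)"
        using a_pos a_le_1 \<delta> by (intro powr_mono') (auto simp: p_def)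
      finally have denom: "exp (p * (real n * A) - 2 * ln 2) \<le> a n powr (2 - \<epsilon>)" .
      have "v n / a n powr (2 - \<epsilon>) \<le> exp (real n * (2 * J)) / exp (p * (real n * A) - 2 * ln 2)"
        using v denom by (intro frac_le) auto
      also have "\<dots> = exp (2 * ln 2) * exp (real n * (2 * J - p * A))"
        by (simp add: exp_diff exp_add[symmetric] algebra_simps)
      also have "\<dots> \<le> exp (2 * ln 2) * exp (real n * (\<delta> * J / 2))"
        using exponent by (intro mult_left_mono exp_mono mult_left_mono) auto
      finally show ?case using v a_pos by simp
    qed
  qed
qed

section \<open>The lognormal Laplace transform\<close>

definition lognormal_tilted_mean :: "real \<Rightarrow> real \<Rightarrow> real" where
  "lognormal_tilted_mean \<sigma> t =
     (\<integral>y. y * exp (- t * y) * lognormal_density \<sigma> y \<partial>lborel) / lognormal_laplace \<sigma> t"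

locale lognormal =
  fixes \<sigma> :: real
  assumes \<sigma>_pos: "0 < \<sigma>"
begin

lemma lognormal_density_nonneg: "0 \<le> lognormal_density \<sigma> y"
  using \<sigma>_pos unfolding lognormal_density_def by auto

lemma lognormal_density_pos: "0 < y \<Longrightarrow> 0 < lognormal_density \<sigma> y"
  using \<sigma>_pos unfolding lognormal_density_def by auto

lemma lognormal_density_nonpos: "y \<le> 0 \<Longrightarrow> lognormal_density \<sigma> y = 0"
  unfolding lognormal_density_def by auto

lemma borel_measurable_lognormal_density[measurable]: "lognormal_density \<sigma> \<in> borel_measurable borel"
  unfolding lognormal_density_def by measurable

lemma lognormal_density_exp: "lognormal_density \<sigma> (exp u) * exp u = normal_density 0 \<sigma> u"
  using \<sigma>_pos unfolding lognormal_density_def normal_density_def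
  by (simp add: real_sqrt_mult power2_eq_square field_simps)

lemma nn_integral_lognormal_density: "(\<integral>\<^sup>+y. ennreal (lognormal_density \<sigma> y) \<partial>lborel) = 1"
proof -
  have "(\<integral>\<^sup>+y. ennreal (lognormal_density \<sigma> y) \<partial>lborel) = (\<integral>\<^sup>+u. ennreal (normal_density 0 \<sigma> u) \<partial>lborel)"
    by (simp add: nn_integral_lborel_exp_substitution lognormal_density_nonpos lognormal_density_exp)
  also have "\<dots> = 1"
    using prob_space.emeasure_space_1[OF prob_space_normal_density[OF \<sigma>_pos, of 0]]
    by (simp add: emeasure_density)
  finally show ?thesis .
qed

lemma integrable_lognormal_density: "integrable lborel (lognormal_density \<sigma>)"
  using nn_integral_lognormal_density lognormal_density_nonneg by (intro integrableI_nonneg) auto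

lemma integral_lognormal_density: "(\<integral>y. lognormal_density \<sigma> y \<partial>lborel) = 1"
  using nn_integral_lognormal_density lognormal_density_nonneg integrable_lognormal_density
  by (subst (asm) nn_integral_eq_integral) auto

lemma integrable_lognormal_laplace:
  assumes "0 \<le> t"
  shows "integrable lborel (\<lambda>y. exp (- t * y) * lognormal_density \<sigma> y)"
proof (rule Bochner_Integration.integrable_bound[OF integrable_lognormal_density])
  show "AE y in lborel. norm (exp (- t * y) * lognormal_density \<sigma> y) \<le> norm (lognormal_density \<sigma> y)"
  proof (intro AE_I2)
    fix y :: real
    show "norm (exp (- t * y) * lognormal_density \<sigma> y) \<le> norm (lognormal_density \<sigma> y)"
    proof (cases "0 < y")
      case True
      then have "exp (- t * y) \<le> 1" using assms by simp
      then show ?thesis using lognormal_density_nonneg[of y] by (simp add: mult_left_le_one_le)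
    qed (simp add: lognormal_density_nonpos)
  qed
qed simp

text \<open>Domination by \<open>lognormal_density / t\<close>, since \<open>t y \<le> exp (t y)\<close>.\<close>

lemma integrable_lognormal_laplace_moment:
  assumes "0 < t"
  shows "integrable lborel (\<lambda>y. y * exp (- t * y) * lognormal_density \<sigma> y)"
proof (rule Bochner_Integration.integrable_bound[OF integrable_mult_right[OF integrable_lognormal_density]])
  show "AE y in lborel. norm (y * exp (- t * y) * lognormal_density \<sigma> y) \<le> norm (1/t * lognormal_density \<sigma> y)"
  proof (intro AE_I2)
    fix y :: real
    show "norm (y * exp (- t * y) * lognormal_density \<sigma> y) \<le> norm (1/t * lognormal_density \<sigma> y)"
    proof (cases "0 < y")
      case True
      have "t * y < exp (t * y)" by (rule exp_gt_self)
      then have "y * exp (- t * y) \<le> 1/t" using assms True by (simp add: exp_minus field_simps)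
      then have "y * exp (- t * y) * lognormal_density \<sigma> y \<le> 1/t * lognormal_density \<sigma> y"
        using lognormal_density_nonneg by (rule mult_right_mono)
      then show ?thesis
        using True assms lognormal_density_nonneg[of y] by (simp add: abs_mult)
    qed (simp add: lognormal_density_nonpos)
  qed
qed simp

lemma lognormal_laplace_pos:
  assumes "0 \<le> t"
  shows "0 < lognormal_laplace \<sigma> t"
  unfolding lognormal_laplace_def
  using integrable_lognormal_laplace[OF assms] lognormal_density_nonneg lognormal_density_pos
  by (intro integral_lborel_pos_if_pos_on_pos[where m=0]) auto

lemma lognormal_laplace_0: "lognormal_laplace \<sigma> 0 = 1"
  unfolding lognormal_laplace_def using integral_lognormal_density by simp

lemma lognormal_laplace_eq_exp_kappa: "0 \<le> t \<Longrightarrow> lognormal_laplace \<sigma> t = exp (lognormal_kappa \<sigma> t)"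
  unfolding lognormal_kappa_def using lognormal_laplace_pos by simp

text \<open>Strict convexity of the Laplace transform, in the form of a tangent inequality at \<open>t\<close>:
  integrate the strict inequality \<open>exp (- c m) (1 - c (y - m)) < exp (- c y)\<close> for \<open>y \<noteq> m\<close>
  against the weight \<open>exp (- t y) f y\<close>.\<close>

lemma lognormal_laplace_gt_tangent:
  assumes t: "0 < t" and tc: "0 \<le> t + c" and c: "c \<noteq> 0"
  shows "exp (- c * lognormal_tilted_mean \<sigma> t) * lognormal_laplace \<sigma> t < lognormal_laplace \<sigma> (t + c)"
proof -
  let ?L = "lognormal_laplace \<sigma>"
  let ?w = "\<lambda>y. exp (- t * y) * lognormal_density \<sigma> y"
  define m where "m = lognormal_tilted_mean \<sigma> t"
  define D where "D y = (exp (- c * y) - exp (- c * m) * (1 - c * (y - m))) * ?w y" for y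
  have D_expand: "D = (\<lambda>y. exp (- (t + c) * y) * lognormal_density \<sigma> y - exp (- c * m) * ?w y
      + (exp (- c * m) * c) * (y * ?w y) - (exp (- c * m) * c * m) * ?w y)"
    by (auto simp: D_def fun_eq_iff algebra_simps exp_add[symmetric])
  have moment: "(\<integral>y. y * ?w y \<partial>lborel) = m * ?L t"
    using lognormal_laplace_pos[of t] t by (simp add: m_def lognormal_tilted_mean_def mult.assoc)
  have "integrable lborel (\<lambda>y. y * ?w y)"
    using integrable_lognormal_laplace_moment[OF t] by (simp add: mult.assoc)
  then have "has_bochner_integral lborel D (?L (t + c) - exp (- c * m) * ?L t
      + (exp (- c * m) * c) * (\<integral>y. y * ?w y \<partial>lborel) - (exp (- c * m) * c * m) * ?L t)"
    unfolding D_expand lognormal_laplace_def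
    using integrable_lognormal_laplace[OF tc] integrable_lognormal_laplace[of t] t
    by (intro has_bochner_integral_diff has_bochner_integral_add has_bochner_integral_mult_right
        has_bochner_integral_integrable) auto
  then have D_integral: "has_bochner_integral lborel D (?L (t + c) - exp (- c * m) * ?L t)"
    unfolding moment by (simp add: algebra_simps)
  have tangent: "exp (- c * m) * (1 - c * (y - m)) \<le> exp (- c * y)" for y
    using mult_left_mono[OF exp_ge_add_one_self[of "- c * (y - m)"], of "exp (- c * m)"]
    by (simp add: exp_add[symmetric] algebra_simps)
  have tangent_strict: "exp (- c * m) * (1 - c * (y - m)) < exp (- c * y)" if "y \<noteq> m" for y
    using mult_strict_left_mono[OF exp_gt_one_plus_self[of "- c * (y - m)"], of "exp (- c * m)"] that c
    by (simp add: exp_add[symmetric] algebra_simps)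
  have "0 < (\<integral>y. D y \<partial>lborel)"
  proof (rule integral_lborel_pos_if_pos_on_pos[where m=m])
    show "integrable lborel D"
      using D_integral by (simp add: has_bochner_integral_iff)
    show "0 \<le> D y" for y
      unfolding D_def using tangent[of y] lognormal_density_nonneg[of y] by simp
    show "0 < D y" if "0 < y" "y \<noteq> m" for y
      unfolding D_def using tangent_strict[OF that(2)] lognormal_density_pos[OF that(1)] by simp
  qed
  then show ?thesis using D_integral by (simp add: has_bochner_integral_iff m_def)
qed

lemma lognormal_kappa_gt_tangent:
  assumes "0 < t" "0 \<le> t + c" "c \<noteq> 0"
  shows "lognormal_kappa \<sigma> t - c * lognormal_tilted_mean \<sigma> t < lognormal_kappa \<sigma> (t + c)"
proof -
  have "ln (exp (- c * lognormal_tilted_mean \<sigma> t) * lognormal_laplace \<sigma> t) < ln (lognormal_laplace \<sigma> (t + c))"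
    using lognormal_laplace_gt_tangent[OF assms] lognormal_laplace_pos[of t] lognormal_laplace_pos[OF assms(2)] assms(1)
    by (subst ln_less_cancel_iff) auto
  then show ?thesis
    unfolding lognormal_kappa_def using lognormal_laplace_pos[of t] assms(1) by (simp add: ln_mult)
qed

text \<open>The tangent inequality bounds the difference quotients of \<open>\<kappa>\<close> at \<open>t\<close> from below by
  \<open>- m\<close> on the right and from above by \<open>- m\<close> on the left, so \<open>\<kappa>' t = - m\<close>.\<close>

lemma lognormal_tilted_mean_eq_neg_deriv:
  assumes t: "0 < t" and der: "(lognormal_kappa \<sigma> has_real_derivative - x) (at t)"
  shows "lognormal_tilted_mean \<sigma> t = x"
proof -
  let ?k = "lognormal_kappa \<sigma>" and ?m = "lognormal_tilted_mean \<sigma> t"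
  let ?Q = "\<lambda>h. (?k (t + h) - ?k t) / h"
  have "(?Q \<longlongrightarrow> - x) (at 0)" using der by (simp add: DERIV_def)
  then have right: "(?Q \<longlongrightarrow> - x) (at_right 0)" and left: "(?Q \<longlongrightarrow> - x) (at_left 0)"
    by (simp_all add: filterlim_at_split)
  have "- ?m \<le> - x"
  proof (rule tendsto_lowerbound[OF right])
    show "\<forall>\<^sub>F h in at_right 0. - ?m \<le> ?Q h"
    proof (rule eventually_at_rightI[where b=1])
      fix h :: real assume "h \<in> {0<..<1}"
      then show "- ?m \<le> ?Q h"
        using lognormal_kappa_gt_tangent[OF t, of h] t by (simp add: field_simps)
    qed simp
  qed simp
  moreover have "- x \<le> - ?m"
  proof (rule tendsto_upperbound[OF left])
    show "\<forall>\<^sub>F h in at_left 0. ?Q h \<le> - ?m"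
    proof (rule eventually_at_leftI[where a="- t"])
      fix h :: real assume "h \<in> {- t<..<0}"
      then show "?Q h \<le> - ?m"
        using lognormal_kappa_gt_tangent[OF t, of h] by (simp add: field_simps)
    qed (use t in simp)
  qed simp
  ultimately show ?thesis by simp
qed

lemma lognormal_kappa_gt_tangent_deriv:
  assumes "0 < \<theta>" "(lognormal_kappa \<sigma> has_real_derivative - x) (at \<theta>)" "0 \<le> \<theta> + c" "c \<noteq> 0"
  shows "lognormal_kappa \<sigma> \<theta> - c * x < lognormal_kappa \<sigma> (\<theta> + c)"
  using lognormal_kappa_gt_tangent[OF assms(1,3,4)] lognormal_tilted_mean_eq_neg_deriv[OF assms(1,2)] by simp

text \<open>\<open>\<kappa> 0 = 0\<close> lies strictly above the tangent line at \<open>\<theta>\<close>, whose value at \<open>0\<close> is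
  \<open>\<kappa> \<theta> + \<theta> x\<close>.\<close>

lemma lognormal_kappa_add_mult_neg:
  assumes "0 < \<theta>" "(lognormal_kappa \<sigma> has_real_derivative - x) (at \<theta>)"
  shows "lognormal_kappa \<sigma> \<theta> + \<theta> * x < 0"
  using lognormal_kappa_gt_tangent_deriv[OF assms, of "- \<theta>"] assms(1)
  by (simp add: lognormal_kappa_def lognormal_laplace_0)

end

section \<open>Exponential tilting of i.i.d. lognormal samples\<close>

definition lognormal_tilted_density :: "real \<Rightarrow> real \<Rightarrow> real \<Rightarrow> real" where
  "lognormal_tilted_density \<sigma> t y = exp (- t * y - lognormal_kappa \<sigma> t) * lognormal_density \<sigma> y"

lemma tilted_distr_eq_density:
  "tilted_distr \<sigma> t = density lborel (\<lambda>y. ennreal (lognormal_tilted_density \<sigma> t y))"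
  unfolding tilted_distr_def lognormal_tilted_density_def ..

lemma sets_lognormal_distr[measurable_cong]: "sets (lognormal_distr \<sigma>) = sets borel"
  unfolding lognormal_distr_def by simp

lemma sets_tilted_distr[measurable_cong]: "sets (tilted_distr \<sigma> t) = sets borel"
  unfolding tilted_distr_def by simp

lemma sets_iid_law: "sets M = sets borel \<Longrightarrow> sets (iid_law n M) = sets (PiM {..<n} (\<lambda>_. lborel))"
  unfolding iid_law_def by (rule sets_PiM_cong) auto

lemma prob_space_iid_law: "prob_space M \<Longrightarrow> prob_space (iid_law n M)"
  unfolding iid_law_def by (intro prob_space_PiM)

context lognormal
begin

lemma borel_measurable_lognormal_tilted_density[measurable]:
  "lognormal_tilted_density \<sigma> t \<in> borel_measurable borel"
  unfolding lognormal_tilted_density_def by measurable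

lemma lognormal_tilted_density_nonneg: "0 \<le> lognormal_tilted_density \<sigma> t y"
  unfolding lognormal_tilted_density_def using lognormal_density_nonneg by simp

lemma lognormal_tilted_density_eq:
  "0 \<le> t \<Longrightarrow> lognormal_tilted_density \<sigma> t y = exp (- t * y) * lognormal_density \<sigma> y / lognormal_laplace \<sigma> t"
  unfolding lognormal_tilted_density_def by (simp add: lognormal_laplace_eq_exp_kappa exp_diff)

lemma nn_integral_tilted_distr_exp:
  assumes "0 \<le> t" "0 \<le> t - l"
  shows "(\<integral>\<^sup>+y. ennreal (exp (l * y)) \<partial>tilted_distr \<sigma> t)
       = ennreal (lognormal_laplace \<sigma> (t - l) / lognormal_laplace \<sigma> t)"
proof -
  have "(\<integral>\<^sup>+y. ennreal (exp (l * y)) \<partial>tilted_distr \<sigma> t)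
      = (\<integral>\<^sup>+y. ennreal (lognormal_tilted_density \<sigma> t y) * ennreal (exp (l * y)) \<partial>lborel)"
    by (simp add: tilted_distr_eq_density nn_integral_density)
  also have "\<dots> = (\<integral>\<^sup>+y. ennreal (exp (- (t - l) * y) * lognormal_density \<sigma> y / lognormal_laplace \<sigma> t) \<partial>lborel)"
  proof (rule nn_integral_cong)
    fix y :: real
    have "lognormal_tilted_density \<sigma> t y * exp (l * y)
        = exp (- (t - l) * y) * lognormal_density \<sigma> y / lognormal_laplace \<sigma> t"
      using lognormal_tilted_density_eq[OF assms(1)] by (simp add: exp_add[symmetric] algebra_simps)
    then show "ennreal (lognormal_tilted_density \<sigma> t y) * ennreal (exp (l * y))
        = ennreal (exp (- (t - l) * y) * lognormal_density \<sigma> y / lognormal_laplace \<sigma> t)"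
      by (simp add: ennreal_mult[symmetric] lognormal_tilted_density_nonneg)
  qed
  also have "\<dots> = ennreal (\<integral>y. exp (- (t - l) * y) * lognormal_density \<sigma> y / lognormal_laplace \<sigma> t \<partial>lborel)"
    using integrable_lognormal_laplace[OF assms(2)] lognormal_laplace_pos[OF assms(1)] lognormal_density_nonneg
    by (intro nn_integral_eq_integral) auto
  finally show ?thesis unfolding lognormal_laplace_def by simp
qed

lemma prob_space_tilted_distr: "0 \<le> t \<Longrightarrow> prob_space (tilted_distr \<sigma> t)"
  using nn_integral_tilted_distr_exp[of t 0] lognormal_laplace_pos[of t]
  by (intro prob_spaceI) (simp add: emeasure_density tilted_distr_eq_density)

lemma prob_space_lognormal_distr: "prob_space (lognormal_distr \<sigma>)"
  unfolding lognormal_distr_def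
  by (rule prob_spaceI) (simp add: emeasure_density nn_integral_lognormal_density)

lemma sets_iid_law_lognormal[measurable_cong]:
  "sets (iid_law n (lognormal_distr \<sigma>)) = sets (PiM {..<n} (\<lambda>_. lborel))"
  by (simp add: sets_iid_law sets_lognormal_distr)

lemma sets_iid_law_tilted[measurable_cong]:
  "sets (iid_law n (tilted_distr \<sigma> t)) = sets (PiM {..<n} (\<lambda>_. lborel))"
  by (simp add: sets_iid_law sets_tilted_distr)

lemma iid_law_lognormal_eq_density:
  "iid_law n (lognormal_distr \<sigma>)
     = density (PiM {..<n} (\<lambda>_. lborel)) (\<lambda>X. \<Prod>i<n. ennreal (lognormal_density \<sigma> (X i)))"
  using prob_space_lognormal_distr unfolding iid_law_def lognormal_distr_def
  by (intro PiM_density) (auto intro: prob_space_imp_sigma_finite simp: sigma_finite_lborel)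

lemma iid_law_tilted_eq_density:
  "0 \<le> t \<Longrightarrow> iid_law n (tilted_distr \<sigma> t)
     = density (PiM {..<n} (\<lambda>_. lborel)) (\<lambda>X. \<Prod>i<n. ennreal (lognormal_tilted_density \<sigma> t (X i)))"
  using prob_space_tilted_distr[of t] unfolding iid_law_def tilted_distr_eq_density
  by (intro PiM_density) (auto intro: prob_space_imp_sigma_finite simp: sigma_finite_lborel)

lemma prod_lognormal_density_eq_tilted:
  assumes "0 \<le> t"
  shows "(\<Prod>i<n. lognormal_density \<sigma> (X i))
       = (\<Prod>i<n. lognormal_tilted_density \<sigma> t (X i)) * (lognormal_laplace \<sigma> t ^ n * exp (t * (\<Sum>i<n. X i)))"
proof -
  have "(\<Prod>i<n. lognormal_tilted_density \<sigma> t (X i))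
      = exp (\<Sum>i<n. - t * X i - lognormal_kappa \<sigma> t) * (\<Prod>i<n. lognormal_density \<sigma> (X i))"
    unfolding lognormal_tilted_density_def by (simp add: prod.distrib exp_sum)
  also have "(\<Sum>i<n. - t * X i - lognormal_kappa \<sigma> t) = - t * (\<Sum>i<n. X i) - real n * lognormal_kappa \<sigma> t"
    by (simp add: sum_subtractf sum_distrib_left)
  finally have tilted: "(\<Prod>i<n. lognormal_tilted_density \<sigma> t (X i))
      = exp (- t * (\<Sum>i<n. X i) - real n * lognormal_kappa \<sigma> t) * (\<Prod>i<n. lognormal_density \<sigma> (X i))" .
  have "exp (- t * (\<Sum>i<n. X i) - real n * lognormal_kappa \<sigma> t) * (lognormal_laplace \<sigma> t ^ n * exp (t * (\<Sum>i<n. X i))) = 1"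
    using lognormal_laplace_eq_exp_kappa[OF assms]
    by (simp add: exp_of_nat_mult[symmetric] mult.left_commute exp_add[symmetric])
  then show ?thesis
    unfolding tilted by (metis mult.assoc mult.commute mult_1_right)
qed

lemma nn_integral_iid_lognormal_eq_tilted:
  assumes t: "0 \<le> t" and F[measurable]: "F \<in> borel_measurable (PiM {..<n} (\<lambda>_. lborel))"
  shows "(\<integral>\<^sup>+X. F X \<partial>iid_law n (lognormal_distr \<sigma>))
     = (\<integral>\<^sup>+X. ennreal (lognormal_laplace \<sigma> t ^ n * exp (t * (\<Sum>i<n. X i))) * F X \<partial>iid_law n (tilted_distr \<sigma> t))"
proof -
  have [measurable]: "(\<lambda>X. \<Prod>i<n. ennreal (f (X i))) \<in> borel_measurable (PiM {..<n} (\<lambda>_. lborel))"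
    if [measurable]: "f \<in> borel_measurable borel" for f :: "real \<Rightarrow> real"
    by measurable
  have "(\<integral>\<^sup>+X. F X \<partial>iid_law n (lognormal_distr \<sigma>))
      = (\<integral>\<^sup>+X. (\<Prod>i<n. ennreal (lognormal_density \<sigma> (X i))) * F X \<partial>PiM {..<n} (\<lambda>_. lborel))"
    unfolding iid_law_lognormal_eq_density by (rule nn_integral_density) measurable
  also have "\<dots> = (\<integral>\<^sup>+X. (\<Prod>i<n. ennreal (lognormal_tilted_density \<sigma> t (X i)))
      * (ennreal (lognormal_laplace \<sigma> t ^ n * exp (t * (\<Sum>i<n. X i))) * F X) \<partial>PiM {..<n} (\<lambda>_. lborel))"
    using lognormal_laplace_pos[OF t]
    by (intro nn_integral_cong) (simp add: prod_lognormal_density_eq_tilted[OF t] prod_ennreal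
        lognormal_density_nonneg lognormal_tilted_density_nonneg prod_nonneg ennreal_mult mult.assoc)
  also have "\<dots> = (\<integral>\<^sup>+X. ennreal (lognormal_laplace \<sigma> t ^ n * exp (t * (\<Sum>i<n. X i))) * F X \<partial>iid_law n (tilted_distr \<sigma> t))"
    unfolding iid_law_tilted_eq_density[OF t] by (rule nn_integral_density[symmetric]) measurable
  finally show ?thesis .
qed

lemma nn_integral_iid_tilted_exp_sum:
  assumes "0 \<le> t" "0 \<le> t - l"
  shows "(\<integral>\<^sup>+X. ennreal (exp (l * (\<Sum>i<n. X i))) \<partial>iid_law n (tilted_distr \<sigma> t))
     = ennreal ((lognormal_laplace \<sigma> (t - l) / lognormal_laplace \<sigma> t) ^ n)"
proof -
  interpret product_sigma_finite "\<lambda>_. tilted_distr \<sigma> t"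
    using prob_space_tilted_distr[OF assms(1)]
    by (simp add: product_sigma_finite_def prob_space_imp_sigma_finite)
  have "(\<integral>\<^sup>+X. ennreal (exp (l * (\<Sum>i<n. X i))) \<partial>iid_law n (tilted_distr \<sigma> t))
      = (\<integral>\<^sup>+X. (\<Prod>i<n. ennreal (exp (l * X i))) \<partial>iid_law n (tilted_distr \<sigma> t))"
    by (intro nn_integral_cong) (simp add: prod_ennreal sum_distrib_left exp_sum)
  also have "\<dots> = (\<Prod>i<n. \<integral>\<^sup>+y. ennreal (exp (l * y)) \<partial>tilted_distr \<sigma> t)"
    unfolding iid_law_def by (rule product_nn_integral_prod) auto
  also have "\<dots> = ennreal ((lognormal_laplace \<sigma> (t - l) / lognormal_laplace \<sigma> t) ^ n)"
    using lognormal_laplace_pos[OF assms(1)] lognormal_laplace_pos[OF assms(2)]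
    by (simp add: nn_integral_tilted_distr_exp[OF assms] prod_ennreal ennreal_power)
  finally show ?thesis .
qed

lemma emeasure_lognormal_distr_singleton: "emeasure (lognormal_distr \<sigma>) {a} = 0"
proof -
  have "emeasure (lognormal_distr \<sigma>) {a} = (\<integral>\<^sup>+y. ennreal (lognormal_density \<sigma> y) * indicator {a} y \<partial>lborel)"
    unfolding lognormal_distr_def by (rule emeasure_density) auto
  also have "\<dots> = (\<integral>\<^sup>+y. 0 \<partial>(lborel :: real measure))"
    by (intro nn_integral_cong_AE) (auto intro: eventually_mono[OF AE_lborel_singleton[of a]])
  finally show ?thesis by simp
qed

end

section \<open>Mean and variance of the estimator\<close>

lemma borel_measurable_beta_est[measurable]:
  "beta_est \<sigma> t x n \<in> borel_measurable (PiM {..<n} (\<lambda>_. lborel))"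
  unfolding beta_est_def by measurable

context lognormal
begin

lemma beta_est_nonneg: "0 \<le> t \<Longrightarrow> 0 \<le> beta_est \<sigma> t x n X"
  unfolding beta_est_def using lognormal_laplace_pos[of t] by simp

lemma beta_est_le: "0 \<le> t \<Longrightarrow> beta_est \<sigma> t x n X \<le> lognormal_laplace \<sigma> t ^ n * exp (t * (real n * x))"
  unfolding beta_est_def using lognormal_laplace_pos[of t]
  by (auto simp: indicator_def intro!: mult_left_mono)

lemma beta_mean_eq_alpha_prob:
  assumes t: "0 \<le> t" and n: "1 \<le> n"
  shows "beta_mean \<sigma> t x n = alpha_prob \<sigma> x n"
proof -
  let ?P = "iid_law n (tilted_distr \<sigma> t)" and ?Q = "iid_law n (lognormal_distr \<sigma>)"
  let ?S = "\<lambda>X. \<Sum>i<n. X i"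
  let ?B = "{X \<in> space ?Q. ?S X < real n * x}" and ?E = "{X \<in> space ?Q. ?S X = real n * x}"
  have space_eq: "space ?P = space ?Q"
    using sets_iid_law_lognormal sets_iid_law_tilted by (metis sets_eq_imp_space_eq)
  have [measurable]: "?B \<in> sets ?Q" "?E \<in> sets ?Q" by measurable
  have "beta_mean \<sigma> t x n = enn2real (\<integral>\<^sup>+X. ennreal (beta_est \<sigma> t x n X) \<partial>?P)"
    unfolding beta_mean_def
    by (intro integral_eq_nn_integral) (auto simp: beta_est_nonneg[OF t])
  also have "(\<integral>\<^sup>+X. ennreal (beta_est \<sigma> t x n X) \<partial>?P)
      = (\<integral>\<^sup>+X. ennreal (lognormal_laplace \<sigma> t ^ n * exp (t * ?S X)) * indicator ?B X \<partial>?P)"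
    using space_eq by (intro nn_integral_cong) (simp add: beta_est_def indicator_def)
  also have "\<dots> = emeasure ?Q ?B"
    by (subst nn_integral_iid_lognormal_eq_tilted[OF t, symmetric]) (auto simp: sets_iid_law_lognormal[symmetric])
  also have "\<dots> = emeasure ?Q (?B \<union> ?E)"
  proof -
    obtain k where k: "n = Suc k" using n by (cases n) auto
    have "emeasure ?Q ?E = 0"
      using prob_space_lognormal_distr emeasure_lognormal_distr_singleton unfolding iid_law_def k
      by (intro emeasure_PiM_sum_eq_const) (auto intro: prob_space_imp_sigma_finite simp: sets_lognormal_distr)
    then show ?thesis by (intro emeasure_Un_null_set[symmetric]) auto
  qed
  also have "?B \<union> ?E = {X \<in> space ?Q. ?S X \<le> real n * x}" by auto
  finally show ?thesis
    unfolding alpha_prob_def by (simp add: measure_def)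
qed

lemma beta_var_le_exp:
  assumes t: "0 \<le> t"
  shows "beta_var \<sigma> t x n \<le> exp (real n * (2 * (lognormal_kappa \<sigma> t + t * x)))"
proof -
  interpret P: prob_space "iid_law n (tilted_distr \<sigma> t)"
    by (rule prob_space_iid_law[OF prob_space_tilted_distr[OF t]])
  have "beta_var \<sigma> t x n \<le> (lognormal_laplace \<sigma> t ^ n * exp (t * (real n * x)))\<^sup>2"
    unfolding beta_var_def beta_mean_def
    using beta_est_nonneg[OF t] beta_est_le[OF t] by (intro P.variance_le_sq_bound) auto
  also have "\<dots> = exp (real n * (2 * (lognormal_kappa \<sigma> t + t * x)))"
    by (simp add: lognormal_laplace_eq_exp_kappa[OF t] exp_of_nat_mult[symmetric] power2_eq_square
        exp_add[symmetric] algebra_simps)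
  finally show ?thesis .
qed

lemma alpha_prob_le_1: "alpha_prob \<sigma> x n \<le> 1"
  unfolding alpha_prob_def
  by (rule prob_space.prob_le_1[OF prob_space_iid_law[OF prob_space_lognormal_distr]])

end

section \<open>Exponential lower bound for \<open>\<alpha>\<^sub>n\<close>\<close>

context lognormal
begin

lemma measure_iid_tilted_sum_ge:
  assumes l: "0 < l" "0 \<le> t - l"
  shows "measure (iid_law n (tilted_distr \<sigma> t)) {X \<in> space (iid_law n (tilted_distr \<sigma> t)). real n * x \<le> (\<Sum>i<n. X i)}
       \<le> (exp (- l * x) * lognormal_laplace \<sigma> (t - l) / lognormal_laplace \<sigma> t) ^ n"
proof -
  let ?P = "iid_law n (tilted_distr \<sigma> t)" and ?S = "\<lambda>X. \<Sum>i<n. X i"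
  have t: "0 \<le> t" using l by simp
  interpret prob_space ?P by (rule prob_space_iid_law[OF prob_space_tilted_distr[OF t]])
  have "emeasure ?P {X \<in> space ?P. real n * x \<le> ?S X}
      \<le> ennreal (exp (- l * (real n * x))) * (\<integral>\<^sup>+X. ennreal (exp (l * ?S X)) * indicator (space ?P) X \<partial>?P)"
    using l by (intro Chernoff_ineq_nn_integral_ge) auto
  also have "(\<integral>\<^sup>+X. ennreal (exp (l * ?S X)) * indicator (space ?P) X \<partial>?P)
      = (\<integral>\<^sup>+X. ennreal (exp (l * ?S X)) \<partial>?P)"
    by (intro nn_integral_cong) simp
  also have "\<dots> = ennreal ((lognormal_laplace \<sigma> (t - l) / lognormal_laplace \<sigma> t) ^ n)"
    by (rule nn_integral_iid_tilted_exp_sum[OF t l(2)])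
  also have "ennreal (exp (- l * (real n * x))) * \<dots>
      = ennreal ((exp (- l * x) * lognormal_laplace \<sigma> (t - l) / lognormal_laplace \<sigma> t) ^ n)"
    by (simp add: ennreal_mult'[symmetric] exp_of_nat_mult[symmetric] power_mult_distrib power_divide ac_simps)
  finally show ?thesis
    using lognormal_laplace_pos[OF t] lognormal_laplace_pos[OF l(2)] by (simp add: emeasure_eq_measure)
qed

lemma measure_iid_tilted_sum_le:
  assumes l: "0 < l" and t: "0 \<le> t"
  shows "measure (iid_law n (tilted_distr \<sigma> t)) {X \<in> space (iid_law n (tilted_distr \<sigma> t)). (\<Sum>i<n. X i) \<le> real n * a}
       \<le> (exp (l * a) * lognormal_laplace \<sigma> (t + l) / lognormal_laplace \<sigma> t) ^ n"
proof -
  let ?P = "iid_law n (tilted_distr \<sigma> t)" and ?S = "\<lambda>X. \<Sum>i<n. X i"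
  have tl: "0 \<le> t - (- l)" using l t by simp
  interpret prob_space ?P by (rule prob_space_iid_law[OF prob_space_tilted_distr[OF t]])
  have "emeasure ?P {X \<in> space ?P. ?S X \<le> real n * a}
      \<le> ennreal (exp (l * (real n * a))) * (\<integral>\<^sup>+X. ennreal (exp (- l * ?S X)) * indicator (space ?P) X \<partial>?P)"
    using l by (intro Chernoff_ineq_nn_integral_le) auto
  also have "(\<integral>\<^sup>+X. ennreal (exp (- l * ?S X)) * indicator (space ?P) X \<partial>?P)
      = (\<integral>\<^sup>+X. ennreal (exp (- l * ?S X)) \<partial>?P)"
    by (intro nn_integral_cong) simp
  also have "\<dots> = ennreal ((lognormal_laplace \<sigma> (t + l) / lognormal_laplace \<sigma> t) ^ n)"
    using nn_integral_iid_tilted_exp_sum[OF t tl] by simp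
  also have "ennreal (exp (l * (real n * a))) * \<dots>
      = ennreal ((exp (l * a) * lognormal_laplace \<sigma> (t + l) / lognormal_laplace \<sigma> t) ^ n)"
    by (simp add: ennreal_mult'[symmetric] exp_of_nat_mult[symmetric] power_mult_distrib power_divide ac_simps)
  finally show ?thesis
    using lognormal_laplace_pos[OF t] lognormal_laplace_pos[OF tl] by (simp add: emeasure_eq_measure)
qed

lemma alpha_prob_ge_tilted:
  assumes t: "0 \<le> t"
  shows "lognormal_laplace \<sigma> t ^ n * exp (t * (real n * a))
           * measure (iid_law n (tilted_distr \<sigma> t))
               {X \<in> space (iid_law n (tilted_distr \<sigma> t)). real n * a < (\<Sum>i<n. X i) \<and> (\<Sum>i<n. X i) < real n * x}
         \<le> alpha_prob \<sigma> x n"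
proof -
  let ?P = "iid_law n (tilted_distr \<sigma> t)" and ?Q = "iid_law n (lognormal_distr \<sigma>)"
  let ?S = "\<lambda>X. \<Sum>i<n. X i" and ?c = "lognormal_laplace \<sigma> t ^ n * exp (t * (real n * a))"
  let ?B = "{X \<in> space (PiM {..<n} (\<lambda>_. lborel)). real n * a < ?S X \<and> ?S X < real n * x}"
  interpret P: prob_space ?P by (rule prob_space_iid_law[OF prob_space_tilted_distr[OF t]])
  interpret Q: prob_space ?Q by (rule prob_space_iid_law[OF prob_space_lognormal_distr])
  have space_P: "space ?P = space (PiM {..<n} (\<lambda>_. lborel))"
    by (rule sets_eq_imp_space_eq[OF sets_iid_law_tilted])
  have space_Q: "space ?Q = space (PiM {..<n} (\<lambda>_. lborel))"
    by (rule sets_eq_imp_space_eq[OF sets_iid_law_lognormal])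
  have B[measurable]: "?B \<in> sets (PiM {..<n} (\<lambda>_. lborel))" by measurable
  have "ennreal ?c * emeasure ?P ?B = (\<integral>\<^sup>+X. ennreal ?c * indicator ?B X \<partial>?P)"
    by (simp add: nn_integral_cmult_indicator sets_iid_law_tilted)
  also have "\<dots> \<le> (\<integral>\<^sup>+X. ennreal (lognormal_laplace \<sigma> t ^ n * exp (t * ?S X)) * indicator ?B X \<partial>?P)"
    using t lognormal_laplace_pos[OF t]
    by (intro nn_integral_mono) (auto intro!: ennreal_leI mult_left_mono split: split_indicator)
  also have "\<dots> = emeasure ?Q ?B"
    by (subst nn_integral_iid_lognormal_eq_tilted[OF t, symmetric]) (auto simp: sets_iid_law_lognormal)
  also have "\<dots> \<le> emeasure ?Q {X \<in> space ?Q. ?S X \<le> real n * x}"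
    by (intro emeasure_mono) (auto simp: space_Q)
  finally show ?thesis
    using lognormal_laplace_pos[OF t]
    by (simp add: space_P alpha_prob_def P.emeasure_eq_measure Q.emeasure_eq_measure ennreal_mult[symmetric])
qed

lemma alpha_prob_ge_Chernoff:
  assumes l: "0 < l" "l \<le> t"
  shows "lognormal_laplace \<sigma> t ^ n * exp (t * (real n * a))
           * (1 - (exp (- l * x) * lognormal_laplace \<sigma> (t - l) / lognormal_laplace \<sigma> t) ^ n
                - (exp (l * a) * lognormal_laplace \<sigma> (t + l) / lognormal_laplace \<sigma> t) ^ n)
         \<le> alpha_prob \<sigma> x n"
proof -
  let ?P = "iid_law n (tilted_distr \<sigma> t)" and ?S = "\<lambda>X. \<Sum>i<n. X i"
  let ?low = "{X \<in> space ?P. ?S X \<le> real n * a}" and ?high = "{X \<in> space ?P. real n * x \<le> ?S X}"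
  have t: "0 \<le> t" using l by simp
  interpret P: prob_space ?P by (rule prob_space_iid_law[OF prob_space_tilted_distr[OF t]])
  have [measurable]: "?low \<in> P.events" "?high \<in> P.events" by measurable
  have "{X \<in> space ?P. real n * a < ?S X \<and> ?S X < real n * x} = space ?P - (?low \<union> ?high)"
    by auto
  then have compl: "measure ?P {X \<in> space ?P. real n * a < ?S X \<and> ?S X < real n * x} = 1 - measure ?P (?low \<union> ?high)"
    by (simp add: P.prob_compl)
  have "measure ?P (?low \<union> ?high) \<le> measure ?P ?low + measure ?P ?high"
    by (intro measure_subadditive) (auto simp: P.emeasure_eq_measure)
  then have "1 - (exp (- l * x) * lognormal_laplace \<sigma> (t - l) / lognormal_laplace \<sigma> t) ^ n
                - (exp (l * a) * lognormal_laplace \<sigma> (t + l) / lognormal_laplace \<sigma> t) ^ n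
      \<le> measure ?P {X \<in> space ?P. real n * a < ?S X \<and> ?S X < real n * x}"
    using compl measure_iid_tilted_sum_ge[of l t n x] measure_iid_tilted_sum_le[OF l(1) t, of n a] l by linarith
  then show ?thesis
    using lognormal_laplace_pos[OF t] by (intro order_trans[OF mult_left_mono alpha_prob_ge_tilted[OF t]]) auto
qed

text \<open>Tilt at \<open>\<theta> + h\<close> and keep the sample sum in the window \<open>(n a, n x)\<close>; \<open>a\<close> is chosen
  so that the Chernoff bound for the lower tail is \<open>exp (- n h\<^sup>2)\<close>.\<close>

lemma eventually_alpha_prob_ge_exp:
  assumes \<theta>: "0 < \<theta>" and der: "(lognormal_kappa \<sigma> has_real_derivative - x) (at \<theta>)" and h: "0 < h"
  defines "a \<equiv> (lognormal_kappa \<sigma> (\<theta> + h) - lognormal_kappa \<sigma> (\<theta> + 2 * h)) / h - h"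
  shows "\<forall>\<^sub>F n in sequentially.
           exp (real n * (lognormal_kappa \<sigma> (\<theta> + h) + (\<theta> + h) * a)) / 2 \<le> alpha_prob \<sigma> x n"
proof -
  let ?k = "lognormal_kappa \<sigma>" and ?L = "lognormal_laplace \<sigma>"
  define t where "t = \<theta> + h"
  define r1 where "r1 = exp (- h * x) * ?L (t - h) / ?L t"
  define r2 where "r2 = exp (h * a) * ?L (t + h) / ?L t"
  have t: "0 \<le> t" using \<theta> h by (simp add: t_def)
  have "r1 = exp (?k \<theta> - h * x - ?k (\<theta> + h))"
    using \<theta> h by (simp add: r1_def t_def lognormal_laplace_eq_exp_kappa exp_diff exp_add[symmetric] algebra_simps)
  then have r1: "0 < r1" "r1 < 1"
    using lognormal_kappa_gt_tangent_deriv[OF \<theta> der, of h] \<theta> h by auto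
  have "h * a = ?k (\<theta> + h) - ?k (\<theta> + 2 * h) - h * h"
    using h by (simp add: a_def field_simps)
  moreover have "r2 = exp (h * a + ?k (\<theta> + 2 * h) - ?k (\<theta> + h))"
    using \<theta> h by (simp add: r2_def t_def lognormal_laplace_eq_exp_kappa exp_diff exp_add[symmetric] algebra_simps)
  ultimately have "r2 = exp (- (h * h))" by simp
  then have r2: "0 < r2" "r2 < 1" using h by auto
  have "(\<lambda>n. r1 ^ n + r2 ^ n) \<longlonglongrightarrow> 0 + 0"
    using r1 r2 by (intro tendsto_add LIMSEQ_power_zero) auto
  then have "\<forall>\<^sub>F n in sequentially. r1 ^ n + r2 ^ n < 1/2"
    by (intro order_tendstoD(2)) auto
  then show ?thesis
  proof eventually_elim
    case (elim n)
    let ?E = "exp (real n * (?k t + t * a))"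
    have "?L t ^ n * exp (t * (real n * a)) = ?E"
      using t by (simp add: lognormal_laplace_eq_exp_kappa exp_of_nat_mult[symmetric] exp_add[symmetric] algebra_simps)
    then have "?E * (1 - r1 ^ n - r2 ^ n) \<le> alpha_prob \<sigma> x n"
      using alpha_prob_ge_Chernoff[of h t n a x] h \<theta> unfolding r1_def r2_def by (simp add: t_def)
    moreover have "?E * (1/2) \<le> ?E * (1 - r1 ^ n - r2 ^ n)"
      using elim by (intro mult_left_mono) auto
    ultimately have "?E / 2 \<le> alpha_prob \<sigma> x n" by linarith
    then show ?case by (simp add: t_def)
  qed
qed

lemma tendsto_tilted_exponent:
  assumes "(lognormal_kappa \<sigma> has_real_derivative - x) (at \<theta>)"
  shows "((\<lambda>h. lognormal_kappa \<sigma> (\<theta> + h)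
            + (\<theta> + h) * ((lognormal_kappa \<sigma> (\<theta> + h) - lognormal_kappa \<sigma> (\<theta> + 2 * h)) / h - h))
          \<longlongrightarrow> lognormal_kappa \<sigma> \<theta> + \<theta> * x) (at_right 0)"
proof -
  let ?k = "lognormal_kappa \<sigma>"
  let ?Q = "\<lambda>h. (?k (\<theta> + h) - ?k \<theta>) / h"
  have Q: "(?Q \<longlongrightarrow> - x) (at 0)" using assms by (simp add: DERIV_def)
  have "((\<lambda>h. ?k (\<theta> + h)) \<longlongrightarrow> ?k \<theta>) (at 0)"
    using DERIV_isCont[OF assms] by (simp add: isCont_def LIM_offset_zero)
  moreover have "((\<lambda>h. ?Q (2 * h)) \<longlongrightarrow> - x) (at 0)"
    by (rule filterlim_compose[OF Q]) (auto intro!: filterlim_atI tendsto_eq_intros simp: eventually_at_filter)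
  ultimately have "((\<lambda>h. ?k (\<theta> + h) + (\<theta> + h) * (?Q h - 2 * ?Q (2 * h) - h))
      \<longlongrightarrow> ?k \<theta> + (\<theta> + 0) * (- x - 2 * (- x) - 0)) (at 0)"
    using Q by (intro tendsto_intros)
  then have "((\<lambda>h. ?k (\<theta> + h) + (\<theta> + h) * (?Q h - 2 * ?Q (2 * h) - h)) \<longlongrightarrow> ?k \<theta> + \<theta> * x) (at_right 0)"
    by (simp add: filterlim_at_split)
  then show ?thesis
    by (rule Lim_transform_eventually) (auto simp: eventually_at_right_field field_simps intro!: exI[of _ 1])
qed

lemma alpha_prob_ge_exp_rate:
  assumes \<theta>: "0 < \<theta>" and der: "(lognormal_kappa \<sigma> has_real_derivative - x) (at \<theta>)" and \<eta>: "0 < \<eta>"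
  shows "\<exists>A > lognormal_kappa \<sigma> \<theta> + \<theta> * x - \<eta>.
           \<forall>\<^sub>F n in sequentially. exp (real n * A) / 2 \<le> alpha_prob \<sigma> x n"
proof -
  let ?k = "lognormal_kappa \<sigma>"
  have "\<forall>\<^sub>F h in at_right 0. 0 < h \<and> ?k \<theta> + \<theta> * x - \<eta>
          < ?k (\<theta> + h) + (\<theta> + h) * ((?k (\<theta> + h) - ?k (\<theta> + 2 * h)) / h - h)"
    using \<eta> by (intro eventually_conj eventually_at_right_less
        order_tendstoD(1)[OF tendsto_tilted_exponent[OF der]]) simp
  then obtain h where "0 < h"
    and "?k \<theta> + \<theta> * x - \<eta> < ?k (\<theta> + h) + (\<theta> + h) * ((?k (\<theta> + h) - ?k (\<theta> + 2 * h)) / h - h)"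
    using eventually_happens'[OF trivial_limit_at_right_real] by blast
  then show ?thesis using eventually_alpha_prob_ge_exp[OF \<theta> der] by blast
qed

end

theorem theorem4p1:
  fixes \<sigma> x \<theta> :: real
  assumes "\<sigma> > 0"
    and "0 < x" and "x < exp (\<sigma>\<^sup>2 / 2)"
    and "\<theta> > 0"
    and "(lognormal_kappa \<sigma> has_real_derivative (- x)) (at \<theta>)"
  shows "(\<forall>n\<ge>1. beta_mean \<sigma> \<theta> x n = alpha_prob \<sigma> x n)
       \<and> (\<forall>\<epsilon>>0. limsup (\<lambda>n. ereal (beta_var \<sigma> \<theta> x n / alpha_prob \<sigma> x n powr (2 - \<epsilon>))) = 0)"
proof (intro conjI allI impI)
  interpret lognormal \<sigma> using assms(1) by unfold_locales
  note \<theta> = assms(4) and der = assms(5)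
  show "beta_mean \<sigma> \<theta> x n = alpha_prob \<sigma> x n" if "1 \<le> n" for n
    using beta_mean_eq_alpha_prob[OF _ that] \<theta> by simp
  show "limsup (\<lambda>n. ereal (beta_var \<sigma> \<theta> x n / alpha_prob \<sigma> x n powr (2 - \<epsilon>))) = 0" if "0 < \<epsilon>" for \<epsilon>
  proof (rule limsup_ratio_eq_0_if_exp_rates[OF lognormal_kappa_add_mult_neg[OF \<theta> der] _ _ _ _ that])
    show "0 \<le> beta_var \<sigma> \<theta> x n" for n
      unfolding beta_var_def by simp
    show "beta_var \<sigma> \<theta> x n \<le> exp (real n * (2 * (lognormal_kappa \<sigma> \<theta> + \<theta> * x)))" for n
      using beta_var_le_exp \<theta> by simp
    show "alpha_prob \<sigma> x n \<le> 1" for n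
      by (rule alpha_prob_le_1)
    show "\<exists>A > lognormal_kappa \<sigma> \<theta> + \<theta> * x - \<eta>. \<forall>\<^sub>F n in sequentially. exp (real n * A) / 2 \<le> alpha_prob \<sigma> x n"
      if "0 < \<eta>" for \<eta>
      by (rule alpha_prob_ge_exp_rate[OF \<theta> der that])
  qed
qed

end
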